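(* The subspace $K[I[\infty]]$ of $K[\mathcal{T}[\infty]]$ spanned by increasing trees is a graded Hopf subalgebra of $(K[\mathcal{T}[\infty]],\star,\Delta_{\mathrm s})$: it contains the unit, is closed under $\star$, and $\Delta_{\mathrm s}(K[I[\infty]])\subseteq K[I[\infty]]\otimes K[I[\infty]]$.
   Context: $K$ is a field. A tree is a finite planar rooted tree, degree = number of non-root nodes, $\odot$ the one-node tree. An $n$--tree is a tree of degree $n$ whose non-root nodes are labelled bijectively by $\{1,\dots,n\}$; $\mathcal{T}[\infty]$ is the set of all $n$--trees. An increasing tree is an $n$--tree in which labels strictly increase along every path starting at the root; $I[\infty]$ is the set of increasing trees. Nodes $N(t)$ are ordered by depth-first post-order (subtrees left to right recursively, then the node; root maximal); write $u_1<\dots<u_n$ for non-root nodes. For a set $A$ of non-root nodes, $t_A$ is obtained by deleting non-root nodes outside $A$ (children attached in order to the parent in place of the deleted node), labels kept; $t_{[i,j]}=t_{\{u_h,\dots,u_k\}}$ if $i\le j$ and $[i,j]\cap[n]=[h,k]\ne\emptyset$, else $\odot$. Standardization $\mathrm s(t)$ of an $\mathbb N$-labelled tree with distinct labels relabels by $1,\dots,|t|$ preserving relative order. $\Delta_{\mathrm s}(t)=\sum_{k=0}^n\mathrm s(t_{[1,k]})\otimes\mathrm s(t_{[k+1,n]})$. $w[m]$ adds $m$ to every label. A partition of $u$ of degree $n\ge1$ is an ordered tuple $(u_{[n_0+1,n_1]},\dots,u_{[n_{k-1}+1,n_k]})$, $0=n_0<\dots<n_k=n$; for $P=(u_1,\dots,u_k)$,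 $I(P,t)$ is the set of maps $f$ from blocks to $N(t)$ with $f(u_1)<\dots<f(u_k)$; $t\#_{P,f}u$ identifies the root of each $u_i$ with $f(u_i)$, the root-children of $u_i$ becoming children of $f(u_i)$ to the right of its original children, labels kept; $t* u=\sum_{P,f}t\#_{P,f}u$ ($|u|\ge1$), $t*\odot=t$; $t\star w=t* w[|t|]$. *)

theory Defs
  imports Main HOL.Modules "HOL-Library.Poly_Mapping"
begin

text \<open>A (planar rooted) tree is represented by the ordered list of the subtrees hanging at
  its (unlabelled) root; the one-node tree is the empty list.\<close>

datatype ltree = LN nat "ltree list"

type_synonym tree = "ltree list"

abbreviation one_node :: tree where "one_node \<equiv> []"

fun label :: "ltree \<Rightarrow> nat" where
  "label (LN a ts) = a"

fun post_node :: "ltree \<Rightarrow> nat list" where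
  "post_node (LN a ts) = concat (map post_node ts) @ [a]"

definition post :: "tree \<Rightarrow> nat list" where
  "post t = concat (map post_node t)"

definition degree :: "tree \<Rightarrow> nat" where
  "degree t = length (post t)"

definition is_ntree :: "nat \<Rightarrow> tree \<Rightarrow> bool" where
  "is_ntree n t \<longleftrightarrow> degree t = n \<and> distinct (post t) \<and> set (post t) = {1..n}"

definition labelled_trees :: "tree set" where
  "labelled_trees = {t. \<exists>n. is_ntree n t}"

fun inc_node :: "ltree \<Rightarrow> bool" where
  "inc_node (LN a ts) \<longleftrightarrow> (\<forall>c\<in>set ts. a < label c \<and> inc_node c)"

definition increasing_trees :: "tree set" where
  "increasing_trees = {t. t \<in> labelled_trees \<and> (\<forall>c\<in>set t. inc_node c)}"

fun restr_node :: "nat set \<Rightarrow> ltree \<Rightarrow> ltree list" where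
  "restr_node A (LN a ts) =
     (if a \<in> A then [LN a (concat (map (restr_node A) ts))] else concat (map (restr_node A) ts))"

definition restr :: "nat set \<Rightarrow> tree \<Rightarrow> tree" where
  "restr A t = concat (map (restr_node A) t)"

fun relabel_node :: "(nat \<Rightarrow> nat) \<Rightarrow> ltree \<Rightarrow> ltree" where
  "relabel_node f (LN a ts) = LN (f a) (map (relabel_node f) ts)"

definition relabel :: "(nat \<Rightarrow> nat) \<Rightarrow> tree \<Rightarrow> tree" where
  "relabel f t = map (relabel_node f) t"

definition std :: "tree \<Rightarrow> tree" where
  "std t = relabel (\<lambda>a. Suc (card {b \<in> set (post t). b < a})) t"

definition shift :: "nat \<Rightarrow> tree \<Rightarrow> tree" where
  "shift m t = relabel (\<lambda>a. a + m) t"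

text \<open>t restricted to the post-order positions i+1,...,j (i.e. t_{[i+1,j]}).\<close>
definition seg :: "nat \<Rightarrow> nat \<Rightarrow> tree \<Rightarrow> tree" where
  "seg i j t = restr (set (drop i (take j (post t)))) t"

text \<open>K[T[\<infinity>]] is represented by finitely supported maps, and
  K[T] tensor K[T] by maps on pairs (basis t \<otimes> t' \<mapsto> (t,t')).\<close>

definition vscale :: "'k::field \<Rightarrow> ('a \<Rightarrow>\<^sub>0 'k) \<Rightarrow> ('a \<Rightarrow>\<^sub>0 'k)" where
  "vscale c v = Poly_Mapping.map (\<lambda>x. c * x) v"

definition basis_vec :: "'a \<Rightarrow> ('a \<Rightarrow>\<^sub>0 'k::field)" where
  "basis_vec t = Poly_Mapping.single t 1"

definition lin_ext :: "('a \<Rightarrow> ('b \<Rightarrow>\<^sub>0 'k::field)) \<Rightarrow> ('a \<Rightarrow>\<^sub>0 'k) \<Rightarrow> ('b \<Rightarrow>\<^sub>0 'k)" where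
  "lin_ext f v = (\<Sum>t\<in>Poly_Mapping.keys v. vscale (Poly_Mapping.lookup v t) (f t))"

definition bilin_ext :: "('a \<Rightarrow> 'b \<Rightarrow> ('c \<Rightarrow>\<^sub>0 'k::field)) \<Rightarrow> ('a \<Rightarrow>\<^sub>0 'k) \<Rightarrow> ('b \<Rightarrow>\<^sub>0 'k) \<Rightarrow> ('c \<Rightarrow>\<^sub>0 'k)" where
  "bilin_ext f v w = (\<Sum>t\<in>Poly_Mapping.keys v. \<Sum>u\<in>Poly_Mapping.keys w. vscale (Poly_Mapping.lookup v t * Poly_Mapping.lookup w u) (f t u))"

definition Delta_tree :: "tree \<Rightarrow> ((tree \<times> tree) \<Rightarrow>\<^sub>0 'k::field)" where
  "Delta_tree t = (\<Sum>k\<leftarrow>[0..<Suc (degree t)].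
      basis_vec (std (seg 0 k t), std (seg k (degree t) t)))"

definition Delta_s :: "(tree \<Rightarrow>\<^sub>0 'k::field) \<Rightarrow> ((tree \<times> tree) \<Rightarrow>\<^sub>0 'k)" where
  "Delta_s = lin_ext Delta_tree"

text \<open>Nodes of t are identified by Some label (non-root) or None (root); g x is the
  forest appended to the right of the children of node x.\<close>
fun graft_node :: "(nat option \<Rightarrow> ltree list) \<Rightarrow> ltree \<Rightarrow> ltree" where
  "graft_node g (LN a ts) = LN a (map (graft_node g) ts @ g (Some a))"

definition graft :: "(nat option \<Rightarrow> ltree list) \<Rightarrow> tree \<Rightarrow> tree" where
  "graft g t = map (graft_node g) t @ g None"

definition nodes :: "tree \<Rightarrow> nat option list" where
  "nodes t = map Some (post t) @ [None]"

text \<open>A partition of u is given by the cut list cs = [n_1,...,n_k] (0 < n_1 < ... < n_k = |u|);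
  a map f with f(u_1) < ... < f(u_k) by strictly increasing post-order positions js of nodes of t.\<close>
definition part_data :: "tree \<Rightarrow> tree \<Rightarrow> (nat list \<times> nat list) set" where
  "part_data t u = {(cs, js). cs \<noteq> [] \<and> sorted_wrt (<) cs \<and> set cs \<subseteq> {1..degree u}
      \<and> last cs = degree u \<and> length js = length cs \<and> sorted_wrt (<) js \<and> set js \<subseteq> {0..degree t}}"

text \<open>i-th block (0-based) of the partition cs of u: the forest of root-children of u_{[n_i+1,n_{i+1}]}.\<close>
definition block :: "tree \<Rightarrow> nat list \<Rightarrow> nat \<Rightarrow> tree" where
  "block u cs i = seg ((0 # cs) ! i) (cs ! i) u"

definition graft_pf :: "tree \<Rightarrow> tree \<Rightarrow> nat list \<Rightarrow> nat list \<Rightarrow> tree" where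
  "graft_pf t u cs js =
     graft (\<lambda>x. concat (map (\<lambda>i. if nodes t ! (js ! i) = x then block u cs i else [])
                              [0..<length cs])) t"

definition graft_prod_tree :: "tree \<Rightarrow> tree \<Rightarrow> (tree \<Rightarrow>\<^sub>0 'k::field)" where
  "graft_prod_tree t u =
     (if u = one_node then basis_vec t
      else (\<Sum>(cs, js)\<in>part_data t u. basis_vec (graft_pf t u cs js)))"

definition star_tree :: "tree \<Rightarrow> tree \<Rightarrow> (tree \<Rightarrow>\<^sub>0 'k::field)" where
  "star_tree t w = graft_prod_tree t (shift (degree t) w)"

definition star :: "(tree \<Rightarrow>\<^sub>0 'k::field) \<Rightarrow> (tree \<Rightarrow>\<^sub>0 'k) \<Rightarrow> (tree \<Rightarrow>\<^sub>0 'k)" where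
  "star = bilin_ext star_tree"

definition KI :: "(tree \<Rightarrow>\<^sub>0 'k::field) set" where
  "KI = module.span vscale (basis_vec ` increasing_trees)"

definition KI_tensor_KI :: "((tree \<times> tree) \<Rightarrow>\<^sub>0 'k::field) set" where
  "KI_tensor_KI = module.span vscale
     ((\<lambda>(s, s'). basis_vec (s, s')) ` (increasing_trees \<times> increasing_trees))"

end

theory Submission
  imports Defs "HOL-Library.Multiset"
begin

text \<open>Deleting nodes and relabelling in an order-preserving way keep labels increasing along
  paths, so both tensor factors of every term of \<open>\<Delta>\<^sub>s\<close> of an increasing tree are
  increasing. In \<open>t \<star> w\<close> every label of \<open>w[|t|]\<close> exceeds every label of \<open>t\<close>, and each
  block of the partition of \<open>w[|t|]\<close> is hung below a single node of \<open>t\<close>; hence labels still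
  increase along paths, and the labels of the grafted tree are exactly those of \<open>t\<close> and of
  \<open>w[|t|]\<close>, i.e. \<open>1, \<dots>, |t| + |w|\<close>. Since \<open>\<star>\<close> and \<open>\<Delta>\<^sub>s\<close> are (bi)linear extensions, closure on
  basis vectors suffices.\<close>

section \<open>Post-order traversal\<close>

lemma post_Nil [simp]: "post [] = []"
  by (simp add: post_def)

lemma post_Cons [simp]: "post (c # ts) = post_node c @ post ts"
  by (simp add: post_def)

lemma post_append [simp]: "post (xs @ ys) = post xs @ post ys"
  by (simp add: post_def)

lemma post_concat: "post (concat xss) = concat (map post xss)"
  by (induct xss) auto

lemma post_node_LN: "post_node (LN a ts) = post ts @ [a]"
  by (simp add: post_def)

declare post_node.simps [simp del]

lemma label_in_post_node: "label c \<in> set (post_node c)"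
  by (cases c) (simp add: post_node_LN)

lemma label_in_post: "c \<in> set ts \<Longrightarrow> label c \<in> set (post ts)"
  by (induct ts) (auto simp: label_in_post_node)

lemma inc_node_LN:
  "inc_node (LN a ts) \<longleftrightarrow> (\<forall>c\<in>set ts. a < label c) \<and> (\<forall>c\<in>set ts. inc_node c)"
  by auto

declare inc_node.simps [simp del]

lemma inc_node_label_le: "inc_node n \<Longrightarrow> x \<in> set (post_node n) \<Longrightarrow> label n \<le> x"
proof (induct n arbitrary: x)
  case (LN a ts)
  show ?case
  proof (cases "x = a")
    case False
    then obtain c where c: "c \<in> set ts" "x \<in> set (post_node c)"
      using LN.prems by (auto simp: post_node_LN post_def)
    then have "label c \<le> x" using LN by (auto simp: inc_node_LN)
    then show ?thesis using c LN.prems by (auto simp: inc_node_LN)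
  qed simp
qed

lemma is_ntree_iff: "is_ntree n t \<longleftrightarrow> distinct (post t) \<and> set (post t) = {1..n}"
  unfolding is_ntree_def degree_def using distinct_card by fastforce

lemma increasing_treesD:
  assumes "t \<in> increasing_trees"
  shows "\<forall>c\<in>set t. inc_node c" and "distinct (post t)" and "set (post t) = {1..degree t}"
  using assms unfolding increasing_trees_def labelled_trees_def is_ntree_def by auto

lemma increasing_treesI:
  "\<forall>c\<in>set t. inc_node c \<Longrightarrow> distinct (post t) \<Longrightarrow> set (post t) = {1..n} \<Longrightarrow> t \<in> increasing_trees"
  unfolding increasing_trees_def labelled_trees_def by (auto simp: is_ntree_iff)

lemma one_node_increasing: "one_node \<in> increasing_trees"
  by (rule increasing_treesI[where n = 0]) auto

section \<open>Restriction, relabelling and standardization\<close>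

lemma post_restr_node: "post (restr_node A n) = filter (\<lambda>x. x \<in> A) (post_node n)"
proof (induct n)
  case (LN a ts)
  have "post (concat (map (restr_node A) ts)) = filter (\<lambda>x. x \<in> A) (post ts)"
    using LN by (induct ts) auto
  then show ?case by (simp add: post_node_LN)
qed

lemma post_restr: "post (restr A t) = filter (\<lambda>x. x \<in> A) (post t)"
  unfolding restr_def by (induct t) (auto simp: post_restr_node)

lemma inc_restr_node: "inc_node n \<Longrightarrow> \<forall>c\<in>set (restr_node A n). inc_node c"
proof (induct n)
  case (LN a ts)
  have "a < label c" if c: "c \<in> set (concat (map (restr_node A) ts))" for c
  proof -
    obtain d where d: "d \<in> set ts" "c \<in> set (restr_node A d)" using c by auto
    have "label c \<in> set (post_node d)"
      using label_in_post[OF d(2)] by (simp add: post_restr_node)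
    then have "label d \<le> label c" using inc_node_label_le d LN.prems by (auto simp: inc_node_LN)
    then show ?thesis using d LN.prems by (auto simp: inc_node_LN)
  qed
  moreover have "\<forall>c\<in>set (concat (map (restr_node A) ts)). inc_node c"
    using LN by (auto simp: inc_node_LN)
  ultimately show ?case by (auto simp: inc_node_LN)
qed

lemma inc_restr: "\<forall>c\<in>set t. inc_node c \<Longrightarrow> \<forall>c\<in>set (restr A t). inc_node c"
  unfolding restr_def using inc_restr_node by fastforce

lemma post_relabel_node: "post_node (relabel_node f n) = map f (post_node n)"
proof (induct n)
  case (LN a ts)
  then have "post (map (relabel_node f) ts) = map f (post ts)" by (induct ts) auto
  then show ?case by (simp add: post_node_LN)
qed

lemma post_relabel: "post (relabel f t) = map f (post t)"
  unfolding relabel_def by (induct t) (auto simp: post_relabel_node)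

lemma label_relabel_node: "label (relabel_node f c) = f (label c)"
  by (cases c) auto

lemma inc_relabel_node:
  "inc_node n \<Longrightarrow> strict_mono_on (set (post_node n)) f \<Longrightarrow> inc_node (relabel_node f n)"
proof (induct n)
  case (LN a ts)
  have sub: "set (post_node c) \<subseteq> set (post_node (LN a ts))" if "c \<in> set ts" for c
    using that by (auto simp: post_node_LN post_def)
  have "f a < f (label c)" if c: "c \<in> set ts" for c
  proof -
    have "a \<in> set (post_node (LN a ts))" "label c \<in> set (post_node (LN a ts))"
      using sub[OF c] label_in_post_node by (auto simp: post_node_LN)
    then show ?thesis using LN.prems c by (auto simp: inc_node_LN strict_mono_on_def)
  qed
  moreover have "inc_node (relabel_node f c)" if c: "c \<in> set ts" for c
    using LN c sub[OF c] by (auto simp: inc_node_LN strict_mono_on_def)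
  ultimately show ?case by (auto simp: inc_node_LN label_relabel_node)
qed

lemma inc_relabel:
  "\<forall>c\<in>set t. inc_node c \<Longrightarrow> strict_mono_on (set (post t)) f \<Longrightarrow>
   \<forall>c\<in>set (relabel f t). inc_node c"
  unfolding relabel_def
proof (induct t)
  case (Cons c t)
  have "strict_mono_on (set (post_node c)) f" "strict_mono_on (set (post t)) f"
    using Cons.prems(2) unfolding strict_mono_on_def by auto
  then show ?case using inc_relabel_node[of c f] Cons by auto
qed simp

lemma rank_strict_mono_on:
  fixes S :: "nat set"
  assumes "finite S"
  shows "strict_mono_on S (\<lambda>a. Suc (card {b \<in> S. b < a}))"
proof (rule strict_mono_onI)
  fix x y assume "x \<in> S" "y \<in> S" "x < y"
  then have "{b \<in> S. b < x} \<subset> {b \<in> S. b < y}" by auto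
  then show "Suc (card {b \<in> S. b < x}) < Suc (card {b \<in> S. b < y})"
    using assms by (simp add: psubset_card_mono)
qed

lemma rank_image:
  fixes S :: "nat set"
  assumes "finite S"
  shows "(\<lambda>a. Suc (card {b \<in> S. b < a})) ` S = {1..card S}"
proof -
  let ?rk = "\<lambda>a. Suc (card {b \<in> S. b < a})"
  have "?rk ` S \<subseteq> {1..card S}"
  proof
    fix y assume "y \<in> ?rk ` S"
    then obtain a where a: "a \<in> S" "y = ?rk a" by auto
    then have "{b \<in> S. b < a} \<subset> S" by auto
    then have "card {b \<in> S. b < a} < card S" using assms by (simp add: psubset_card_mono)
    then show "y \<in> {1..card S}" using a by auto
  qed
  moreover have "card (?rk ` S) = card {1..card S}"
    using strict_mono_on_imp_inj_on[OF rank_strict_mono_on[OF assms]] by (simp add: card_image)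
  ultimately show ?thesis by (simp add: card_subset_eq)
qed

lemma std_increasing:
  assumes "\<forall>c\<in>set s. inc_node c" and "distinct (post s)"
  shows "std s \<in> increasing_trees"
proof -
  let ?S = "set (post s)"
  let ?rk = "\<lambda>a. Suc (card {b \<in> ?S. b < a})"
  have mono: "strict_mono_on ?S ?rk" by (rule rank_strict_mono_on) simp
  have post_std: "post (std s) = map ?rk (post s)"
    unfolding std_def by (simp add: post_relabel)
  show ?thesis
  proof (rule increasing_treesI)
    show "\<forall>c\<in>set (std s). inc_node c" unfolding std_def using inc_relabel[OF assms(1) mono] .
    show "distinct (post (std s))" unfolding post_std
      using assms(2) strict_mono_on_imp_inj_on[OF mono] by (simp add: distinct_map)
    show "set (post (std s)) = {1..card ?S}" unfolding post_std using rank_image[of ?S] by simp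
  qed
qed

lemma std_seg_increasing: "t \<in> increasing_trees \<Longrightarrow> std (seg i j t) \<in> increasing_trees"
  unfolding seg_def
  by (intro std_increasing inc_restr) (auto dest: increasing_treesD simp: post_restr)

section \<open>Grafting\<close>

lemma mset_post_graft_node:
  "mset (post_node (graft_node g n)) =
   mset (post_node n) + (\<Sum>a\<leftarrow>post_node n. mset (post (g (Some a))))"
proof (induct n)
  case (LN a ts)
  have "mset (post (map (graft_node g) ts)) = mset (post ts) + (\<Sum>a\<leftarrow>post ts. mset (post (g (Some a))))"
    using LN by (induct ts) auto
  then show ?case by (simp add: post_node_LN)
qed

lemma mset_post_graft:
  "mset (post (graft g t)) = mset (post t) + (\<Sum>x\<leftarrow>nodes t. mset (post (g x)))"
proof -
  have "mset (post (map (graft_node g) t)) = mset (post t) + (\<Sum>a\<leftarrow>post t. mset (post (g (Some a))))"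
    by (induct t) (auto simp: mset_post_graft_node)
  then show ?thesis unfolding graft_def nodes_def by (simp add: comp_def)
qed

lemma label_graft_node: "label (graft_node g c) = label c"
  by (cases c) auto

lemma inc_graft_node:
  "inc_node n \<Longrightarrow> \<forall>a\<in>set (post_node n). \<forall>c\<in>set (g (Some a)). a < label c \<and> inc_node c \<Longrightarrow>
   inc_node (graft_node g n)"
proof (induct n)
  case (LN a ts)
  have "\<forall>c\<in>set ts. \<forall>b\<in>set (post_node c). \<forall>d\<in>set (g (Some b)). b < label d \<and> inc_node d"
    using LN.prems(2) by (auto simp: post_node_LN post_def)
  then have "\<forall>c\<in>set ts. inc_node (graft_node g c)" using LN by (auto simp: inc_node_LN)
  moreover have "\<forall>c\<in>set (g (Some a)). a < label c \<and> inc_node c"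
    using LN.prems(2) by (auto simp: post_node_LN)
  ultimately show ?case using LN.prems(1) by (auto simp: inc_node_LN label_graft_node)
qed

lemma inc_graft:
  assumes "\<forall>c\<in>set t. inc_node c" and "\<forall>x. \<forall>c\<in>set (g x). inc_node c"
    and "\<forall>a\<in>set (post t). \<forall>c\<in>set (g (Some a)). a < label c"
  shows "\<forall>c\<in>set (graft g t). inc_node c"
proof -
  have "inc_node (graft_node g d)" if "d \<in> set t" for d
    using that assms by (intro inc_graft_node) (auto simp: post_def)
  then show ?thesis using assms(2) by (auto simp: graft_def)
qed

lemma filter_mem_infix: "distinct (A @ B @ C) \<Longrightarrow> filter (\<lambda>x. x \<in> set B) (A @ B @ C) = B"
  by (simp add: disjoint_iff filter_empty_conv) blast

lemma filter_mem_slice: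
  assumes "distinct L"
  shows "filter (\<lambda>x. x \<in> set (drop i (take j L))) L = drop i (take j L)"
proof -
  have "L = take i (take j L) @ drop i (take j L) @ drop j L"
    by (metis append_assoc append_take_drop_id)
  then show ?thesis using filter_mem_infix assms by metis
qed

lemma slices_append:
  assumes "p \<le> c" and "c \<le> d"
  shows "drop p (take c L) @ drop c (take d L) = drop p (take d L)"
proof -
  have "drop p (take d L) = take ((c - p) + (d - c)) (drop p L)"
    using assms by (simp add: drop_take)
  also have "\<dots> = take (c - p) (drop p L) @ take (d - c) (drop c L)"
    using assms by (simp only: take_add drop_drop le_add_diff_inverse2)
  finally show ?thesis by (simp add: drop_take)
qed

lemma concat_slices:
  "cs \<noteq> [] \<Longrightarrow> sorted_wrt (<) cs \<Longrightarrow> p \<le> hd cs \<Longrightarrow>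
   concat (map (\<lambda>i. drop ((p # cs) ! i) (take (cs ! i) L)) [0..<length cs]) = drop p (take (last cs) L)"
proof (induct cs arbitrary: p)
  case (Cons c cs)
  show ?case
  proof (cases "cs = []")
    case False
    then have "c < hd cs" and "hd cs \<le> last cs"
      using Cons.prems(2) by (cases cs; auto simp: less_imp_le)+
    then have IH: "concat (map (\<lambda>i. drop ((c # cs) ! i) (take (cs ! i) L)) [0..<length cs]) =
        drop c (take (last cs) L)"
      using Cons.hyps[of c] Cons.prems(2) False by auto
    have "concat (map (\<lambda>i. drop ((p # c # cs) ! i) (take ((c # cs) ! i) L)) [0..<length (c # cs)])
        = drop p (take c L) @ drop c (take (last cs) L)"
      by (simp only: length_Cons map_upt_Suc IH[symmetric]) simp
    also have "\<dots> = drop p (take (last cs) L)"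
      using \<open>c < hd cs\<close> \<open>hd cs \<le> last cs\<close> Cons.prems(3) by (simp add: slices_append)
    finally show ?thesis using False by simp
  qed simp
qed simp

lemma post_block:
  "distinct (post u) \<Longrightarrow> post (block u cs i) = drop ((0 # cs) ! i) (take (cs ! i) (post u))"
  unfolding block_def seg_def by (simp add: post_restr filter_mem_slice)

lemma concat_post_blocks:
  assumes "distinct (post u)" and "cs \<noteq> []" and "sorted_wrt (<) cs" and "last cs = degree u"
  shows "concat (map (\<lambda>i. post (block u cs i)) [0..<length cs]) = post u"
  using concat_slices[OF assms(2,3), of 0 "post u"] assms(1,4)
  by (simp add: post_block degree_def)

text \<open>Each block \<open>i\<close> is sent to the single node \<open>N ! p i\<close>; collecting the forests attached to
  all nodes therefore recovers every block exactly once.\<close>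
lemma sum_list_mset_dispatch:
  assumes "distinct N" and "\<And>i. i < k \<Longrightarrow> p i < length N"
  shows "(\<Sum>x\<leftarrow>N. mset (concat (map (\<lambda>i. if N ! p i = x then F i else []) [0..<k]))) =
    mset (concat (map F [0..<k]))"
proof -
  have "(\<Sum>x\<leftarrow>N. mset (concat (map (\<lambda>i. if N ! p i = x then F i else []) [0..<k]))) =
      (\<Sum>x\<in>set N. \<Sum>i\<in>{0..<k}. if N ! p i = x then mset (F i) else {#})"
    using assms(1) by (simp add: sum.distinct_set_conv_list mset_concat comp_def if_distrib
        sum_set_upt_conv_sum_list_nat[symmetric] cong: if_cong)
  also have "\<dots> = (\<Sum>i\<in>{0..<k}. \<Sum>x\<in>set N. if N ! p i = x then mset (F i) else {#})"
    by (rule sum.swap)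
  also have "\<dots> = (\<Sum>i\<in>{0..<k}. mset (F i))"
    using assms(2) by (intro sum.cong) (auto simp: sum.delta)
  finally show ?thesis
    by (simp add: mset_concat comp_def sum_set_upt_conv_sum_list_nat[symmetric])
qed

lemma mset_post_graft_pf:
  assumes "(cs, js) \<in> part_data t u" and "distinct (post t)" and "distinct (post u)"
  shows "mset (post (graft_pf t u cs js)) = mset (post t) + mset (post u)"
proof -
  have cs: "cs \<noteq> []" "sorted_wrt (<) cs" "last cs = degree u"
    and js: "length js = length cs" "set js \<subseteq> {0..degree t}"
    using assms(1) by (auto simp: part_data_def)
  have targets: "js ! i < length (nodes t)" if "i < length cs" for i
  proof -
    have "js ! i \<in> set js" using that js(1) by simp
    then show ?thesis using js(2) by (auto simp: nodes_def degree_def)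
  qed
  have "distinct (nodes t)"
    using assms(2) by (simp add: nodes_def distinct_map)
  then have "(\<Sum>x\<leftarrow>nodes t. mset (concat (map (\<lambda>i. if nodes t ! (js ! i) = x
        then post (block u cs i) else []) [0..<length cs]))) =
      mset (concat (map (\<lambda>i. post (block u cs i)) [0..<length cs]))"
    using targets by (rule sum_list_mset_dispatch)
  also have "\<dots> = mset (post u)"
    using concat_post_blocks[OF assms(3) cs] by simp
  finally show ?thesis
    unfolding graft_pf_def mset_post_graft
    by (simp add: post_concat comp_def if_distrib cong: if_cong)
qed

lemma inc_graft_pf:
  assumes "\<forall>c\<in>set t. inc_node c" and "\<forall>c\<in>set u. inc_node c"
    and "\<forall>a\<in>set (post t). \<forall>b\<in>set (post u). a < b"
  shows "\<forall>c\<in>set (graft_pf t u cs js). inc_node c"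
proof -
  have block: "inc_node c \<and> label c \<in> set (post u)" if "c \<in> set (block u cs i)" for c i
  proof -
    have c: "c \<in> set (restr (set (drop ((0 # cs) ! i) (take (cs ! i) (post u)))) u)"
      using that unfolding block_def seg_def .
    show ?thesis using inc_restr[OF assms(2)] label_in_post[OF c] c by (auto simp: post_restr)
  qed
  show ?thesis
    unfolding graft_pf_def
    by (rule inc_graft[OF assms(1)]) (use block assms(3) in \<open>auto split: if_splits\<close>)
qed

lemma post_shift: "post (shift m w) = map (\<lambda>a. a + m) (post w)"
  by (simp add: shift_def post_relabel)

lemma graft_pf_shift_increasing:
  assumes t: "t \<in> increasing_trees" and w: "w \<in> increasing_trees"
    and pd: "(cs, js) \<in> part_data t (shift (degree t) w)"
  shows "graft_pf t (shift (degree t) w) cs js \<in> increasing_trees"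
proof -
  let ?u = "shift (degree t) w"
  note tp = increasing_treesD[OF t] and wp = increasing_treesD[OF w]
  have du: "distinct (post ?u)"
    using wp(2) by (simp add: post_shift distinct_map)
  have su: "set (post ?u) = {degree t + 1..degree t + degree w}"
    using wp(3) by (auto simp: post_shift image_iff)
  have "\<forall>c\<in>set ?u. inc_node c"
    unfolding shift_def by (rule inc_relabel[OF wp(1)]) (simp add: strict_mono_on_def)
  then have "\<forall>c\<in>set (graft_pf t ?u cs js). inc_node c"
    using inc_graft_pf[OF tp(1)] tp(3) su by auto
  moreover have "mset (post (graft_pf t ?u cs js)) = mset (post t @ post ?u)"
    using mset_post_graft_pf[OF pd tp(2) du] by simp
  moreover have "distinct (post t @ post ?u)" and "set (post t @ post ?u) = {1..degree t + degree w}"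
    using tp(2,3) du su by auto
  ultimately show ?thesis
    by (metis increasing_treesI mset_eq_imp_distinct_iff mset_eq_setD)
qed

section \<open>Linear extensions\<close>

lemma lookup_vscale [simp]: "Poly_Mapping.lookup (vscale c v) k = c * Poly_Mapping.lookup v k"
  unfolding vscale_def by (simp add: Poly_Mapping.map.rep_eq when_def)

interpretation V: module "vscale :: 'k::field \<Rightarrow> ('a \<Rightarrow>\<^sub>0 'k) \<Rightarrow> _"
  by unfold_locales (auto intro!: poly_mapping_eqI simp: lookup_add algebra_simps)

lemma keys_span_basis_vec:
  "v \<in> V.span (basis_vec ` S :: ('a \<Rightarrow>\<^sub>0 'k::field) set) \<Longrightarrow> Poly_Mapping.keys v \<subseteq> S"
proof -
  have "V.span (basis_vec ` S :: ('a \<Rightarrow>\<^sub>0 'k) set) \<subseteq> {v. Poly_Mapping.keys v \<subseteq> S}"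
  proof (rule V.span_minimal)
    show "basis_vec ` S \<subseteq> {v. Poly_Mapping.keys v \<subseteq> S}" by (auto simp: basis_vec_def)
    have "Poly_Mapping.keys (vscale c v) \<subseteq> Poly_Mapping.keys v" for c and v :: "'a \<Rightarrow>\<^sub>0 'k"
      by (auto simp: in_keys_iff)
    then show "V.subspace {v :: 'a \<Rightarrow>\<^sub>0 'k. Poly_Mapping.keys v \<subseteq> S}"
      unfolding V.subspace_def using keys_add by fastforce
  qed
  then show "v \<in> V.span (basis_vec ` S) \<Longrightarrow> Poly_Mapping.keys v \<subseteq> S" by blast
qed

lemma lin_ext_in_span:
  assumes "Poly_Mapping.keys v \<subseteq> S" and "\<And>t. t \<in> S \<Longrightarrow> f t \<in> V.span B"
  shows "lin_ext f v \<in> V.span B"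
  unfolding lin_ext_def using assms by (auto intro!: V.span_sum V.span_scale)

lemma bilin_ext_in_span:
  assumes "Poly_Mapping.keys v \<subseteq> S" and "Poly_Mapping.keys w \<subseteq> T"
    and "\<And>s t. s \<in> S \<Longrightarrow> t \<in> T \<Longrightarrow> f s t \<in> V.span B"
  shows "bilin_ext f v w \<in> V.span B"
  unfolding bilin_ext_def using assms by (auto intro!: V.span_sum V.span_scale)

lemma keys_KI: "v \<in> (KI :: (tree \<Rightarrow>\<^sub>0 'k::field) set) \<Longrightarrow> Poly_Mapping.keys v \<subseteq> increasing_trees"
  unfolding KI_def by (rule keys_span_basis_vec)

lemma star_tree_KI:
  assumes t: "t \<in> increasing_trees" and w: "w \<in> increasing_trees"
  shows "(star_tree t w :: tree \<Rightarrow>\<^sub>0 'k::field) \<in> KI"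
proof (cases "shift (degree t) w = one_node")
  case True
  then show ?thesis
    unfolding star_tree_def graft_prod_tree_def KI_def using t by (auto intro: V.span_base)
next
  case False
  have "basis_vec (graft_pf t (shift (degree t) w) cs js) \<in> V.span (basis_vec ` increasing_trees)"
    if "(cs, js) \<in> part_data t (shift (degree t) w)" for cs js
    using graft_pf_shift_increasing[OF t w that] by (auto intro: V.span_base)
  then show ?thesis
    unfolding star_tree_def graft_prod_tree_def KI_def using False
    by (auto intro!: V.span_sum split: prod.split)
qed

lemma Delta_tree_KI_tensor_KI:
  assumes "t \<in> increasing_trees"
  shows "(Delta_tree t :: (tree \<times> tree) \<Rightarrow>\<^sub>0 'k::field) \<in> KI_tensor_KI"
  unfolding Delta_tree_def KI_tensor_KI_def sum_set_upt_conv_sum_list_nat[symmetric]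
proof (rule V.span_sum, rule V.span_base)
  fix k
  show "basis_vec (std (seg 0 k t), std (seg k (degree t) t))
      \<in> (\<lambda>(s, s'). basis_vec (s, s')) ` (increasing_trees \<times> increasing_trees)"
    using std_seg_increasing[OF assms] by force
qed

theorem proposition4p4:
  shows "(basis_vec one_node :: tree \<Rightarrow>\<^sub>0 'k::field) \<in> KI
    \<and> (\<forall>v\<in>(KI :: (tree \<Rightarrow>\<^sub>0 'k) set). \<forall>w\<in>KI. star v w \<in> KI)
    \<and> (\<forall>v\<in>(KI :: (tree \<Rightarrow>\<^sub>0 'k) set). Delta_s v \<in> KI_tensor_KI)"
proof (intro conjI ballI)
  show "(basis_vec one_node :: tree \<Rightarrow>\<^sub>0 'k) \<in> KI"
    unfolding KI_def using one_node_increasing by (auto intro: V.span_base)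
next
  fix v w :: "tree \<Rightarrow>\<^sub>0 'k"
  assume v: "v \<in> KI" and w: "w \<in> KI"
  have "star v w \<in> V.span (basis_vec ` increasing_trees)"
    unfolding star_def
    by (rule bilin_ext_in_span[OF keys_KI[OF v] keys_KI[OF w] star_tree_KI[unfolded KI_def]])
  then show "star v w \<in> KI" unfolding KI_def .
next
  fix v :: "tree \<Rightarrow>\<^sub>0 'k"
  assume v: "v \<in> KI"
  show "Delta_s v \<in> KI_tensor_KI"
    unfolding Delta_s_def KI_tensor_KI_def
    by (rule lin_ext_in_span[OF keys_KI[OF v] Delta_tree_KI_tensor_KI[unfolded KI_tensor_KI_def]])
qed

end
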